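(* Let $G_1,\dots,G_k$ be graphs that are pairwise QASST equivalent and pairwise not locally equivalent, and suppose every graph QASST equivalent to $G_1$ is locally equivalent to one of $G_1,\dots,G_k$. Then $|\mathcal{O}(G_1)|+\cdots+|\mathcal{O}(G_k)|=\Phi(G_1)$.
   Context: Graphs are finite, simple, connected, on a fixed labelled vertex set. The local complement $c_v(G)$ replaces the induced subgraph on the neighbourhood of $v$ by its complement; graphs are locally equivalent if related by a finite sequence of local complements, and $\mathcal{O}(G)$ is the set of graphs locally equivalent to $G$ (labelled graphs). A split is a bipartition $V=A\sqcup B$ with the $A$–$B$ edges forming a complete bipartite graph between the vertices having neighbours across; it is strong if no other split crosses it. Cutting along all nontrivial strong splits (each side plus a new paired marker vertex adjacent to the vertices having neighbours across) yields a tree whose nodes are labelled by quotient graphs. Two graphs are QASST equivalent if they have the same strong splits and corresponding quotient graphs are locally equivalent. $\Phi(G)$ is the number of graphs QASST equivalent to $G$. *)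

theory Defs
  imports Main
begin

text \<open>Graphs on a fixed finite labelled vertex set V are represented by their
  (symmetric, irreflexive) edge relation E.\<close>

definition is_graph :: "'a set \<Rightarrow> ('a \<times> 'a) set \<Rightarrow> bool" where
  "is_graph V E \<longleftrightarrow> E \<subseteq> V \<times> V \<and> sym E \<and> (\<forall>x. (x, x) \<notin> E)
     \<and> (\<forall>x\<in>V. \<forall>y\<in>V. (x, y) \<in> E\<^sup>*)"

definition nbhd :: "('a \<times> 'a) set \<Rightarrow> 'a \<Rightarrow> 'a set" where
  "nbhd E v = {x. (v, x) \<in> E}"

definition local_compl :: "'a \<Rightarrow> ('a \<times> 'a) set \<Rightarrow> ('a \<times> 'a) set" where
  "local_compl v E = E - {(x, y). x \<in> nbhd E v \<and> y \<in> nbhd E v \<and> x \<noteq> y}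
     \<union> ({(x, y). x \<in> nbhd E v \<and> y \<in> nbhd E v \<and> x \<noteq> y} - E)"

definition loc_equiv :: "'a set \<Rightarrow> ('a \<times> 'a) set \<Rightarrow> ('a \<times> 'a) set \<Rightarrow> bool" where
  "loc_equiv V G H \<longleftrightarrow> (G, H) \<in> {(E, local_compl v E) | E v. v \<in> V}\<^sup>*"

definition orbit :: "'a set \<Rightarrow> ('a \<times> 'a) set \<Rightarrow> ('a \<times> 'a) set set" where
  "orbit V G = {H. loc_equiv V G H}"

text \<open>A split is represented by either of its sides.\<close>
definition is_split :: "'a set \<Rightarrow> ('a \<times> 'a) set \<Rightarrow> 'a set \<Rightarrow> bool" where
  "is_split V E A \<longleftrightarrow> A \<subseteq> V \<and> A \<noteq> {} \<and> V - A \<noteq> {} \<and>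
     (\<forall>x\<in>A. \<forall>y\<in>V - A.
        ((\<exists>y'\<in>V - A. (x, y') \<in> E) \<and> (\<exists>x'\<in>A. (x', y) \<in> E)) \<longrightarrow> (x, y) \<in> E)"

definition crosses :: "'a set \<Rightarrow> 'a set \<Rightarrow> 'a set \<Rightarrow> bool" where
  "crosses V A C \<longleftrightarrow> A \<inter> C \<noteq> {} \<and> A \<inter> (V - C) \<noteq> {} \<and>
     (V - A) \<inter> C \<noteq> {} \<and> (V - A) \<inter> (V - C) \<noteq> {}"

definition strong_split :: "'a set \<Rightarrow> ('a \<times> 'a) set \<Rightarrow> 'a set \<Rightarrow> bool" where
  "strong_split V E A \<longleftrightarrow> is_split V E A \<and> (\<forall>C. is_split V E C \<longrightarrow> \<not> crosses V A C)"

definition strong_splits :: "'a set \<Rightarrow> ('a \<times> 'a) set \<Rightarrow> 'a set set" where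
  "strong_splits V E = {A. strong_split V E A}"

definition nt_strong_sides :: "'a set \<Rightarrow> ('a \<times> 'a) set \<Rightarrow> 'a set set" where
  "nt_strong_sides V E = {A. strong_split V E A \<and> card A \<ge> 2 \<and> card (V - A) \<ge> 2}"

definition is_partition :: "'a set \<Rightarrow> 'a set set \<Rightarrow> bool" where
  "is_partition V P \<longleftrightarrow> {} \<notin> P \<and> \<Union>P = V \<and>
     (\<forall>X\<in>P. \<forall>Y\<in>P. X \<noteq> Y \<longrightarrow> X \<inter> Y = {})"

text \<open>A node u is encoded by the
  partition of V given by the edges of the tree incident with u: the part of
  an incident edge is the set of leaves (original vertices) beyond that edge.
  A part {v} is the original vertex v; any other part X is a marker vertex,
  namely the marker created when cutting along the strong split {X, V - X},
  on the side not containing X.  These partitions are exactly those whose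
  parts are singletons or sides of nontrivial strong splits, in which every
  nontrivial strong split has a side inside a single part, and which have at
  least three parts (internal nodes have degree \<ge> 3), except that for
  |V| \<le> 2 the decomposition is a single node.\<close>
definition split_nodes :: "'a set \<Rightarrow> ('a \<times> 'a) set \<Rightarrow> 'a set set set" where
  "split_nodes V E = {P. is_partition V P \<and>
     (\<forall>X\<in>P. card X = 1 \<or> X \<in> nt_strong_sides V E) \<and>
     (\<forall>S\<in>nt_strong_sides V E. \<exists>X\<in>P. S \<subseteq> X \<or> V - S \<subseteq> X) \<and>
     (card P \<ge> 3 \<or> card V \<le> 2)}"

text \<open>Quotient graph at the node P: vertices are the parts (original vertices
  and markers); two of them are adjacent iff some edge of G joins the
  corresponding vertex sets (this is the adjacency produced by the marker
  construction: markers are adjacent to the vertices having neighbours across).\<close>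
definition quotient_graph :: "('a \<times> 'a) set \<Rightarrow> 'a set set \<Rightarrow> ('a set \<times> 'a set) set" where
  "quotient_graph E P = {(X, Y). X \<in> P \<and> Y \<in> P \<and> X \<noteq> Y \<and> (\<exists>x\<in>X. \<exists>y\<in>Y. (x, y) \<in> E)}"

definition qasst_equiv :: "'a set \<Rightarrow> ('a \<times> 'a) set \<Rightarrow> ('a \<times> 'a) set \<Rightarrow> bool" where
  "qasst_equiv V G H \<longleftrightarrow> is_graph V G \<and> is_graph V H \<and>
     strong_splits V G = strong_splits V H \<and>
     (\<forall>P\<in>split_nodes V G. loc_equiv P (quotient_graph G P) (quotient_graph H P))"

definition Phi :: "'a set \<Rightarrow> ('a \<times> 'a) set \<Rightarrow> nat" where
  "Phi V G = card {H. qasst_equiv V G H}"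

end

theory Submission
  imports Defs
begin

text \<open>Local complementation at v preserves every split: writing the edges across a split
  {A, V - A} as a product p x \<and> q y, complementing at v \<in> A only replaces p by another
  predicate.  Hence locally equivalent graphs have the same strong splits and the same
  decomposition nodes.  At a node P every part is a complete cut, so the edges of G between
  two parts are either none or all pairs of their frontier vertices.  Hence if v has a
  neighbour outside its part X, its neighbours in the other parts are exactly the frontiers
  of the parts adjacent to X, and complementing at v acts on the quotient graph exactly as
  complementing at the marker X; otherwise the quotient graph does not change.  So every
  local equivalence class lies inside a QASST class, which by hypothesis is the disjoint
  union of the orbits of G 1, ..., G k.\<close>

section \<open>Local complementation\<close>

lemma local_compl_iff:
  "(x, y) \<in> local_compl v E \<longleftrightarrow> ((x, y) \<in> E) \<noteq> ((v, x) \<in> E \<and> (v, y) \<in> E \<and> x \<noteq> y)"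
  by (auto simp: local_compl_def nbhd_def)

lemma local_compl_nbhd_iff: "(v, v) \<notin> E \<Longrightarrow> (v, x) \<in> local_compl v E \<longleftrightarrow> (v, x) \<in> E"
  by (auto simp: local_compl_iff)

lemma local_compl_isolated: "\<forall>x. (v, x) \<notin> E \<Longrightarrow> local_compl v E = E"
  by (auto simp: local_compl_def nbhd_def)

lemma local_compl_local_compl: "(v, v) \<notin> E \<Longrightarrow> local_compl v (local_compl v E) = E"
  by (auto simp: local_compl_iff)

lemma sym_local_compl: "sym E \<Longrightarrow> sym (local_compl v E)"
  unfolding sym_def by (auto simp: local_compl_iff)

lemma rtrancl_subset_rtrancl_local_compl:
  assumes "sym E" and "(v, v) \<notin> E"
  shows "E\<^sup>* \<subseteq> (local_compl v E)\<^sup>*"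
proof -
  have "(x, y) \<in> (local_compl v E)\<^sup>*" if "(x, y) \<in> E" for x y
  proof (cases "(x, y) \<in> local_compl v E")
    case False
    \<comment> \<open>the edge was removed, so x and y are neighbours of v, whose edges are kept\<close>
    with that have "(v, x) \<in> E" "(v, y) \<in> E"
      by (auto simp: local_compl_iff)
    with assms have "(x, v) \<in> local_compl v E" "(v, y) \<in> local_compl v E"
      using sym_local_compl[OF assms(1)] local_compl_nbhd_iff[OF assms(2)]
      by (auto simp: sym_def)
    then show ?thesis
      by (meson converse_rtrancl_into_rtrancl r_into_rtrancl)
  qed auto
  then show ?thesis
    by (simp add: rtrancl_subset_rtrancl subrelI)
qed

lemma is_graph_local_compl:
  assumes "is_graph V E"
  shows "is_graph V (local_compl v E)"
proof -
  have "sym E" "\<forall>x. (x, x) \<notin> E" "E \<subseteq> V \<times> V" "\<forall>x\<in>V. \<forall>y\<in>V. (x, y) \<in> E\<^sup>*"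
    using assms unfolding is_graph_def by auto
  moreover have "local_compl v E \<subseteq> V \<times> V"
    using \<open>E \<subseteq> V \<times> V\<close> by (auto simp: local_compl_def nbhd_def)
  moreover have "E\<^sup>* \<subseteq> (local_compl v E)\<^sup>*"
    using calculation by (simp add: rtrancl_subset_rtrancl_local_compl)
  ultimately show ?thesis
    unfolding is_graph_def using sym_local_compl by (auto simp: local_compl_iff)
qed

lemma loc_equiv_refl: "loc_equiv V G G"
  by (simp add: loc_equiv_def)

lemma loc_equiv_trans: "loc_equiv V G H \<Longrightarrow> loc_equiv V H K \<Longrightarrow> loc_equiv V G K"
  unfolding loc_equiv_def by (rule rtrancl_trans)

lemma loc_equiv_local_compl: "v \<in> V \<Longrightarrow> loc_equiv V G (local_compl v G)"
  unfolding loc_equiv_def by blast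

lemma loc_equiv_induct [consumes 1, case_names refl step]:
  assumes "loc_equiv V G H"
    and "P G"
    and "\<And>H v. loc_equiv V G H \<Longrightarrow> v \<in> V \<Longrightarrow> P H \<Longrightarrow> P (local_compl v H)"
  shows "P H"
  using assms(1)[unfolded loc_equiv_def]
proof (induction rule: rtrancl_induct)
  case base
  show ?case by (fact assms(2))
next
  case (step H H')
  then obtain v where "v \<in> V" "H' = local_compl v H"
    by blast
  with step assms(3) show ?case
    by (simp add: loc_equiv_def)
qed

section \<open>Splits under local complementation\<close>

definition complete_cut :: "'a set \<Rightarrow> ('a \<times> 'a) set \<Rightarrow> 'a set \<Rightarrow> bool" where
  "complete_cut V E X \<longleftrightarrow> (\<forall>x\<in>X. \<forall>y\<in>V - X.
     ((\<exists>y'\<in>V - X. (x, y') \<in> E) \<and> (\<exists>x'\<in>X. (x', y) \<in> E)) \<longrightarrow> (x, y) \<in> E)"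

lemma complete_cutD:
  "complete_cut V E X \<Longrightarrow> x \<in> X \<Longrightarrow> y \<in> V - X \<Longrightarrow> y' \<in> V - X \<Longrightarrow> (x, y') \<in> E
    \<Longrightarrow> x' \<in> X \<Longrightarrow> (x', y) \<in> E \<Longrightarrow> (x, y) \<in> E"
  unfolding complete_cut_def by blast

lemma is_split_iff_complete_cut:
  "is_split V E A \<longleftrightarrow> A \<subseteq> V \<and> A \<noteq> {} \<and> V - A \<noteq> {} \<and> complete_cut V E A"
  unfolding is_split_def complete_cut_def by blast

lemma complete_cut_iff_product:
  "complete_cut V E X \<longleftrightarrow> (\<exists>p q. \<forall>x\<in>X. \<forall>y\<in>V - X. (x, y) \<in> E \<longleftrightarrow> p x \<and> q y)"
proof
  assume cut: "complete_cut V E X"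
  show "\<exists>p q. \<forall>x\<in>X. \<forall>y\<in>V - X. (x, y) \<in> E \<longleftrightarrow> p x \<and> q y"
  proof (intro exI ballI)
    fix x y
    assume "x \<in> X" "y \<in> V - X"
    with cut show "(x, y) \<in> E \<longleftrightarrow> (\<exists>y'\<in>V - X. (x, y') \<in> E) \<and> (\<exists>x'\<in>X. (x', y) \<in> E)"
      unfolding complete_cut_def by blast
  qed
next
  assume "\<exists>p q. \<forall>x\<in>X. \<forall>y\<in>V - X. (x, y) \<in> E \<longleftrightarrow> p x \<and> q y"
  then obtain p q where "\<forall>x\<in>X. \<forall>y\<in>V - X. (x, y) \<in> E \<longleftrightarrow> p x \<and> q y"
    by blast
  then show "complete_cut V E X"
    unfolding complete_cut_def by blast
qed

lemma complete_cut_Diff: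
  assumes "sym E" and "complete_cut V E X"
  shows "complete_cut V E (V - X)"
proof -
  obtain p q where "\<forall>x\<in>X. \<forall>y\<in>V - X. (x, y) \<in> E \<longleftrightarrow> p x \<and> q y"
    using assms(2) complete_cut_iff_product by metis
  with assms(1) have "\<forall>y\<in>V - X. \<forall>x\<in>V - (V - X). (y, x) \<in> E \<longleftrightarrow> q y \<and> p x"
    by (auto simp: sym_def)
  then show ?thesis
    using complete_cut_iff_product by blast
qed

lemma complete_cut_local_compl_inside:
  assumes "complete_cut V E X" and "v \<in> X"
  shows "complete_cut V (local_compl v E) X"
proof -
  obtain p q where pq: "\<forall>x\<in>X. \<forall>y\<in>V - X. (x, y) \<in> E \<longleftrightarrow> p x \<and> q y"
    using assms(1) complete_cut_iff_product by metis
  define p' where "p' x \<longleftrightarrow> p x \<noteq> ((v, x) \<in> E \<and> p v)" for x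
  have "(x, y) \<in> local_compl v E \<longleftrightarrow> p' x \<and> q y" if "x \<in> X" "y \<in> V - X" for x y
  proof -
    have "(x, y) \<in> E \<longleftrightarrow> p x \<and> q y" "(v, y) \<in> E \<longleftrightarrow> p v \<and> q y" "x \<noteq> y"
      using pq assms(2) that by auto
    then show ?thesis
      unfolding p'_def local_compl_iff by argo
  qed
  then show ?thesis
    unfolding complete_cut_iff_product by blast
qed

lemma complete_cut_local_compl:
  assumes "sym E" and "E \<subseteq> V \<times> V" and "X \<subseteq> V" and "complete_cut V E X"
  shows "complete_cut V (local_compl v E) X"
proof -
  consider "v \<in> X" | "v \<in> V - X" | "v \<notin> V"
    by blast
  then show ?thesis
  proof cases
    case 1
    with assms(4) show ?thesis
      by (rule complete_cut_local_compl_inside)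
  next
    case 2
    with assms have "complete_cut V (local_compl v E) (V - X)"
      by (simp add: complete_cut_Diff complete_cut_local_compl_inside)
    then have "complete_cut V (local_compl v E) (V - (V - X))"
      by (simp add: complete_cut_Diff sym_local_compl assms(1))
    with assms(3) show ?thesis
      by (simp add: double_diff)
  next
    case 3
    with assms(2) have "local_compl v E = E"
      by (intro local_compl_isolated) blast
    with assms(4) show ?thesis
      by simp
  qed
qed

lemma is_split_local_compl:
  assumes "is_graph V E" and "is_split V E A"
  shows "is_split V (local_compl v E) A"
proof -
  have "sym E" "E \<subseteq> V \<times> V"
    using assms(1) by (auto simp: is_graph_def)
  with assms(2) show ?thesis
    by (simp add: is_split_iff_complete_cut complete_cut_local_compl)
qed

lemma is_split_local_compl_iff:
  assumes "is_graph V E"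
  shows "is_split V (local_compl v E) A \<longleftrightarrow> is_split V E A"
proof
  assume "is_split V (local_compl v E) A"
  then have "is_split V (local_compl v (local_compl v E)) A"
    using assms by (simp add: is_split_local_compl is_graph_local_compl)
  moreover have "local_compl v (local_compl v E) = E"
    using assms by (simp add: is_graph_def local_compl_local_compl)
  ultimately show "is_split V E A"
    by simp
qed (use assms in \<open>rule is_split_local_compl\<close>)

lemma strong_splits_local_compl:
  "is_graph V E \<Longrightarrow> strong_splits V (local_compl v E) = strong_splits V E"
  unfolding strong_splits_def strong_split_def by (simp add: is_split_local_compl_iff)

lemma split_nodes_eq:
  assumes "strong_splits V E = strong_splits V F"
  shows "split_nodes V E = split_nodes V F"
proof -
  from assms have "strong_split V E = strong_split V F"
    unfolding strong_splits_def by (simp add: set_eq_iff fun_eq_iff)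
  then show ?thesis
    unfolding split_nodes_def nt_strong_sides_def by simp
qed

lemma complete_cut_split_node_part:
  assumes "P \<in> split_nodes V G" and "X \<in> P"
  shows "complete_cut V G X"
proof -
  have "card X = 1 \<or> X \<in> nt_strong_sides V G"
    using assms unfolding split_nodes_def by blast
  then show ?thesis
  proof
    assume "card X = 1"
    then show ?thesis
      by (auto simp: complete_cut_def card_1_singleton_iff)
  next
    assume "X \<in> nt_strong_sides V G"
    then show ?thesis
      by (simp add: nt_strong_sides_def strong_split_def is_split_iff_complete_cut)
  qed
qed

section \<open>Quotient graphs under local complementation\<close>

definition frontier_vertices :: "'a set \<Rightarrow> ('a \<times> 'a) set \<Rightarrow> 'a set \<Rightarrow> 'a set" where
  "frontier_vertices V E X = {x \<in> X. \<exists>y\<in>V - X. (x, y) \<in> E}"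

lemma quotient_graph_iff:
  "(X, Y) \<in> quotient_graph E P \<longleftrightarrow> X \<in> P \<and> Y \<in> P \<and> X \<noteq> Y \<and> (\<exists>x\<in>X. \<exists>y\<in>Y. (x, y) \<in> E)"
  by (simp add: quotient_graph_def)

lemma sym_quotient_graph: "sym E \<Longrightarrow> sym (quotient_graph E P)"
  unfolding sym_def quotient_graph_def by blast

lemma partition_part_unique:
  "is_partition V P \<Longrightarrow> X \<in> P \<Longrightarrow> Y \<in> P \<Longrightarrow> x \<in> X \<Longrightarrow> x \<in> Y \<Longrightarrow> X = Y"
  unfolding is_partition_def by blast

lemma partition_part_subset: "is_partition V P \<Longrightarrow> X \<in> P \<Longrightarrow> X \<subseteq> V"
  unfolding is_partition_def by blast

lemma frontier_vertices_nonempty_if_quotient_edge: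
  assumes P: "is_partition V P" and "(X, Y) \<in> quotient_graph E P"
  shows "frontier_vertices V E X \<noteq> {}"
proof -
  obtain x y where xy: "x \<in> X" "y \<in> Y" "(x, y) \<in> E" and parts: "X \<in> P" "Y \<in> P" "X \<noteq> Y"
    using assms(2) by (auto simp: quotient_graph_iff)
  have "y \<in> V" "y \<notin> X"
    using partition_part_subset[OF P \<open>Y \<in> P\<close>] partition_part_unique[OF P] xy parts by auto
  with xy have "x \<in> frontier_vertices V E X"
    by (auto simp: frontier_vertices_def)
  then show ?thesis
    by blast
qed

lemma pair_set_eqI: "(\<And>x y. (x, y) \<in> A \<longleftrightarrow> (x, y) \<in> B) \<Longrightarrow> A = B"
  by auto

lemma quotient_graph_local_compl_interior:
  assumes P: "is_partition V P" and Xv: "Xv \<in> P" "v \<in> Xv"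
    and "v \<notin> frontier_vertices V G Xv"
  shows "quotient_graph (local_compl v G) P = quotient_graph G P"
proof (rule pair_set_eqI)
  have same: "(x, y) \<in> local_compl v G \<longleftrightarrow> (x, y) \<in> G"
    if "X \<in> P" "Y \<in> P" "X \<noteq> Y" "x \<in> X" "y \<in> Y" for X Y x y
  proof -
    have "\<not> ((v, x) \<in> G \<and> (v, y) \<in> G)"
    proof
      assume "(v, x) \<in> G \<and> (v, y) \<in> G"
      moreover have "x \<in> V" "y \<in> V"
        using that partition_part_subset[OF P] by blast+
      ultimately have "x \<in> Xv" "y \<in> Xv"
        using assms(4) Xv(2) by (auto simp: frontier_vertices_def)
      then show False
        using that Xv(1) partition_part_unique[OF P] by metis
    qed
    then show ?thesis
      unfolding local_compl_iff by blast
  qed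
  show "(X, Y) \<in> quotient_graph (local_compl v G) P \<longleftrightarrow> (X, Y) \<in> quotient_graph G P" for X Y
    unfolding quotient_graph_iff using same by blast
qed

context
  fixes V :: "'a set" and G :: "('a \<times> 'a) set" and P :: "'a set set"
  assumes sym_G: "sym G" and partition: "is_partition V P"
    and cuts: "\<forall>Z\<in>P. complete_cut V G Z"
begin

lemma quotient_edge_frontiers_nonempty:
  assumes "(X, Y) \<in> quotient_graph G P"
  shows "frontier_vertices V G X \<noteq> {} \<and> frontier_vertices V G Y \<noteq> {}"
proof -
  have "(Y, X) \<in> quotient_graph G P"
    using assms sym_quotient_graph[OF sym_G] by (auto simp: sym_def)
  with assms show ?thesis
    using frontier_vertices_nonempty_if_quotient_edge[OF partition] by blast
qed

lemma edge_between_parts_iff: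
  assumes parts: "X \<in> P" "Y \<in> P" "X \<noteq> Y" "x \<in> X" "y \<in> Y"
  shows "(x, y) \<in> G \<longleftrightarrow>
    (X, Y) \<in> quotient_graph G P \<and> x \<in> frontier_vertices V G X \<and> y \<in> frontier_vertices V G Y"
proof -
  have across: "x \<in> V - Y" "y \<in> V - X"
    using parts partition_part_subset[OF partition] partition_part_unique[OF partition] by blast+
  show ?thesis
  proof
    assume "(x, y) \<in> G"
    moreover from this sym_G have "(y, x) \<in> G"
      by (simp add: sym_def)
    ultimately show "(X, Y) \<in> quotient_graph G P \<and>
        x \<in> frontier_vertices V G X \<and> y \<in> frontier_vertices V G Y"
      using across parts by (auto simp: quotient_graph_iff frontier_vertices_def)
  next
    assume adj: "(X, Y) \<in> quotient_graph G P \<and>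
      x \<in> frontier_vertices V G X \<and> y \<in> frontier_vertices V G Y"
    then obtain x0 y0 where "x0 \<in> X" "y0 \<in> Y" "(x0, y0) \<in> G"
      by (auto simp: quotient_graph_iff)
    obtain x' y' where "y' \<in> V - X" "(x, y') \<in> G" "x' \<in> V - Y" "(y, x') \<in> G"
      using adj by (auto simp: frontier_vertices_def)
    have "y0 \<in> V - X"
      using \<open>y0 \<in> Y\<close> parts partition_part_subset[OF partition] partition_part_unique[OF partition] by blast
    with cuts parts have "(x, y0) \<in> G"
      using \<open>y' \<in> V - X\<close> \<open>(x, y') \<in> G\<close> \<open>x0 \<in> X\<close> \<open>(x0, y0) \<in> G\<close>
      by (blast intro: complete_cutD)
    with sym_G have "(y0, x) \<in> G"
      by (simp add: sym_def)
    with cuts parts across have "(y, x) \<in> G"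
      using \<open>x' \<in> V - Y\<close> \<open>(y, x') \<in> G\<close> \<open>y0 \<in> Y\<close>
      by (blast intro: complete_cutD)
    with sym_G show "(x, y) \<in> G"
      by (simp add: sym_def)
  qed
qed

context
  fixes v :: 'a and Xv :: "'a set"
  assumes irrefl_v: "(v, v) \<notin> G" and Xv: "Xv \<in> P" "v \<in> Xv"
    and v_frontier: "v \<in> frontier_vertices V G Xv"
begin

lemma nbhd_frontier_vertex_iff:
  assumes "Y \<in> P" "Y \<noteq> Xv" "y \<in> Y"
  shows "(v, y) \<in> G \<longleftrightarrow> (Xv, Y) \<in> quotient_graph G P \<and> y \<in> frontier_vertices V G Y"
  using edge_between_parts_iff[OF Xv(1) assms(1) assms(2)[symmetric] Xv(2) assms(3)] v_frontier
  by blast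

lemma quotient_graph_local_compl_marker_edge:
  assumes Y: "Y \<in> P" "Y \<noteq> Xv"
  shows "(Xv, Y) \<in> quotient_graph (local_compl v G) P \<longleftrightarrow> (Xv, Y) \<in> quotient_graph G P"
proof
  assume "(Xv, Y) \<in> quotient_graph (local_compl v G) P"
  then obtain x y where "x \<in> Xv" "y \<in> Y" "(x, y) \<in> local_compl v G"
    by (auto simp: quotient_graph_iff)
  then have "(x, y) \<in> G \<or> (v, y) \<in> G"
    by (auto simp: local_compl_iff)
  with \<open>x \<in> Xv\<close> \<open>y \<in> Y\<close> Xv Y show "(Xv, Y) \<in> quotient_graph G P"
    by (auto simp: quotient_graph_iff)
next
  assume "(Xv, Y) \<in> quotient_graph G P"
  then obtain y where "y \<in> frontier_vertices V G Y"
    using quotient_edge_frontiers_nonempty by blast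
  then have "y \<in> Y" "(v, y) \<in> local_compl v G"
    using nbhd_frontier_vertex_iff Y \<open>(Xv, Y) \<in> quotient_graph G P\<close> local_compl_nbhd_iff[OF irrefl_v]
    by (auto simp: frontier_vertices_def)
  with Xv Y show "(Xv, Y) \<in> quotient_graph (local_compl v G) P"
    by (auto simp: quotient_graph_iff)
qed

lemma quotient_graph_local_compl_other_edge:
  assumes parts: "X \<in> P" "Y \<in> P" "X \<noteq> Y" "X \<noteq> Xv" "Y \<noteq> Xv"
  shows "(X, Y) \<in> quotient_graph (local_compl v G) P \<longleftrightarrow>
    ((X, Y) \<in> quotient_graph G P) \<noteq> ((Xv, X) \<in> quotient_graph G P \<and> (Xv, Y) \<in> quotient_graph G P)"
    (is "_ \<longleftrightarrow> ?adj")
proof -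
  let ?F = "frontier_vertices V G"
  have edge: "(x, y) \<in> local_compl v G \<longleftrightarrow> x \<in> ?F X \<and> y \<in> ?F Y \<and> ?adj"
    if "x \<in> X" "y \<in> Y" for x y
  proof -
    have "x \<noteq> y"
      using that parts partition_part_unique[OF partition] by metis
    moreover have "(x, y) \<in> G \<longleftrightarrow> (X, Y) \<in> quotient_graph G P \<and> x \<in> ?F X \<and> y \<in> ?F Y"
      by (rule edge_between_parts_iff[OF parts(1-3) that])
    ultimately show ?thesis
      using nbhd_frontier_vertex_iff[of X x] nbhd_frontier_vertex_iff[of Y y] parts that
      unfolding local_compl_iff by argo
  qed
  have "(X, Y) \<in> quotient_graph (local_compl v G) P \<longleftrightarrow>
      (\<exists>x\<in>X. \<exists>y\<in>Y. (x, y) \<in> local_compl v G)"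
    using parts by (simp add: quotient_graph_iff)
  also have "\<dots> \<longleftrightarrow> ?F X \<noteq> {} \<and> ?F Y \<noteq> {} \<and> ?adj"
    using edge by (auto simp: frontier_vertices_def)
  also have "\<dots> \<longleftrightarrow> ?adj"
    using quotient_edge_frontiers_nonempty[of X Y] quotient_edge_frontiers_nonempty[of Xv X]
      quotient_edge_frontiers_nonempty[of Xv Y]
    by blast
  finally show ?thesis .
qed

lemma quotient_graph_local_compl_frontier:
  "quotient_graph (local_compl v G) P = local_compl Xv (quotient_graph G P)"
proof (rule pair_set_eqI)
  fix X Y
  let ?Q = "quotient_graph G P" and ?Q' = "quotient_graph (local_compl v G) P"
  have sym_Q: "(X, Xv) \<in> ?Q \<longleftrightarrow> (Xv, X) \<in> ?Q"
    using sym_quotient_graph[OF sym_G] by (auto simp: sym_def)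
  have sym_Q': "(X, Xv) \<in> ?Q' \<longleftrightarrow> (Xv, X) \<in> ?Q'"
    using sym_quotient_graph[OF sym_local_compl[OF sym_G]] by (auto simp: sym_def)
  have "(Xv, Xv) \<notin> ?Q"
    by (simp add: quotient_graph_iff)
  then consider "\<not> (X \<in> P \<and> Y \<in> P \<and> X \<noteq> Y)" | "X = Xv" "Y \<in> P" "Y \<noteq> Xv"
    | "Y = Xv" "X \<in> P" "X \<noteq> Xv" | "X \<in> P" "Y \<in> P" "X \<noteq> Y" "X \<noteq> Xv" "Y \<noteq> Xv"
    by blast
  then show "(X, Y) \<in> ?Q' \<longleftrightarrow> (X, Y) \<in> local_compl Xv ?Q"
  proof cases
    case 1
    then show ?thesis
      by (auto simp: local_compl_iff quotient_graph_iff)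
  next
    case 2
    with quotient_graph_local_compl_marker_edge \<open>(Xv, Xv) \<notin> ?Q\<close> show ?thesis
      by (simp add: local_compl_iff)
  next
    case 3
    with quotient_graph_local_compl_marker_edge[of X] sym_Q sym_Q' \<open>(Xv, Xv) \<notin> ?Q\<close> show ?thesis
      by (simp add: local_compl_iff)
  next
    case 4
    with quotient_graph_local_compl_other_edge show ?thesis
      by (simp add: local_compl_iff)
  qed
qed

end

end

lemma loc_equiv_quotient_graph_local_compl:
  assumes "is_graph V G" and P: "P \<in> split_nodes V G" and "v \<in> V"
  shows "loc_equiv P (quotient_graph G P) (quotient_graph (local_compl v G) P)"
proof -
  have part: "is_partition V P"
    using P by (simp add: split_nodes_def)
  then obtain Xv where Xv: "Xv \<in> P" "v \<in> Xv"
    using \<open>v \<in> V\<close> unfolding is_partition_def by blast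
  have "sym G" "(v, v) \<notin> G"
    using assms(1) by (auto simp: is_graph_def)
  have cuts: "\<forall>Z\<in>P. complete_cut V G Z"
    using complete_cut_split_node_part[OF P] by blast
  show ?thesis
  proof (cases "v \<in> frontier_vertices V G Xv")
    case True
    have "quotient_graph (local_compl v G) P = local_compl Xv (quotient_graph G P)"
      by (rule quotient_graph_local_compl_frontier[OF \<open>sym G\<close> part cuts \<open>(v, v) \<notin> G\<close> Xv True])
    with Xv(1) show ?thesis
      by (simp add: loc_equiv_local_compl)
  next
    case False
    with part Xv have "quotient_graph (local_compl v G) P = quotient_graph G P"
      by (rule quotient_graph_local_compl_interior)
    then show ?thesis
      by (simp add: loc_equiv_refl)
  qed
qed

section \<open>Orbits and QASST classes\<close>

lemma is_graph_if_qasst_equiv: "qasst_equiv V G H \<Longrightarrow> is_graph V H"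
  by (simp add: qasst_equiv_def)

lemma qasst_equiv_refl: "is_graph V G \<Longrightarrow> qasst_equiv V G G"
  by (simp add: qasst_equiv_def loc_equiv_refl)

lemma qasst_equiv_trans:
  assumes GH: "qasst_equiv V G H" and HK: "qasst_equiv V H K"
  shows "qasst_equiv V G K"
proof -
  have "strong_splits V H = strong_splits V G"
    using GH by (simp add: qasst_equiv_def)
  then have nodes: "split_nodes V H = split_nodes V G"
    by (rule split_nodes_eq)
  have "loc_equiv P (quotient_graph G P) (quotient_graph K P)" if "P \<in> split_nodes V G" for P
  proof (rule loc_equiv_trans)
    show "loc_equiv P (quotient_graph G P) (quotient_graph H P)"
      using GH that by (simp add: qasst_equiv_def)
    show "loc_equiv P (quotient_graph H P) (quotient_graph K P)"
      using HK that nodes by (simp add: qasst_equiv_def)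
  qed
  with GH HK show ?thesis
    by (simp add: qasst_equiv_def)
qed

lemma qasst_equiv_local_compl:
  assumes "is_graph V G" and "v \<in> V"
  shows "qasst_equiv V G (local_compl v G)"
  using assms is_graph_local_compl[OF assms(1)] strong_splits_local_compl[OF assms(1)]
    loc_equiv_quotient_graph_local_compl[OF assms(1)]
  by (simp add: qasst_equiv_def)

lemma qasst_equiv_if_loc_equiv:
  assumes "is_graph V G" and "loc_equiv V G H"
  shows "qasst_equiv V G H"
  using assms(2)
proof (induction rule: loc_equiv_induct)
  case refl
  show ?case
    using assms(1) by (rule qasst_equiv_refl)
next
  case (step H v)
  from \<open>qasst_equiv V G H\<close> have "is_graph V H"
    by (rule is_graph_if_qasst_equiv)
  with step show ?case
    by (blast intro: qasst_equiv_trans qasst_equiv_local_compl)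
qed

lemma loc_equiv_sym:
  assumes "is_graph V G" and "loc_equiv V G H"
  shows "loc_equiv V H G"
  using assms(2)
proof (induction rule: loc_equiv_induct)
  case refl
  show ?case
    by (rule loc_equiv_refl)
next
  case (step H v)
  have "is_graph V H"
    using assms(1) step(1) by (rule is_graph_if_qasst_equiv[OF qasst_equiv_if_loc_equiv])
  then have "local_compl v (local_compl v H) = H"
    by (simp add: is_graph_def local_compl_local_compl)
  then have "loc_equiv V (local_compl v H) H"
    using loc_equiv_local_compl[OF \<open>v \<in> V\<close>, of "local_compl v H"] by simp
  then show ?case
    using step(3) by (rule loc_equiv_trans)
qed

lemma finite_orbit:
  assumes "finite V" and "is_graph V G"
  shows "finite (orbit V G)"
proof (rule finite_subset)
  show "orbit V G \<subseteq> Pow (V \<times> V)"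
  proof
    fix H
    assume "H \<in> orbit V G"
    with assms(2) have "is_graph V H"
      unfolding orbit_def by (blast intro: is_graph_if_qasst_equiv[OF qasst_equiv_if_loc_equiv])
    then show "H \<in> Pow (V \<times> V)"
      by (simp add: is_graph_def)
  qed
  show "finite (Pow (V \<times> V))"
    using assms(1) by simp
qed

lemma orbits_disjoint:
  assumes "is_graph V H" and "\<not> loc_equiv V G H"
  shows "orbit V G \<inter> orbit V H = {}"
  using assms loc_equiv_sym loc_equiv_trans unfolding orbit_def by blast

lemma qasst_class_eq_UN_orbit:
  assumes "\<forall>i\<in>I. qasst_equiv V G\<^sub>0 (G i)"
    and "\<forall>H. qasst_equiv V G\<^sub>0 H \<longrightarrow> (\<exists>i\<in>I. loc_equiv V H (G i))"
  shows "{H. qasst_equiv V G\<^sub>0 H} = (\<Union>i\<in>I. orbit V (G i))"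
proof (intro equalityI subsetI)
  fix H
  assume "H \<in> {H. qasst_equiv V G\<^sub>0 H}"
  then obtain i where "i \<in> I" "loc_equiv V H (G i)" "is_graph V H"
    using assms(2) by (auto simp: qasst_equiv_def)
  then have "H \<in> orbit V (G i)"
    by (simp add: orbit_def loc_equiv_sym)
  with \<open>i \<in> I\<close> show "H \<in> (\<Union>i\<in>I. orbit V (G i))"
    by blast
next
  fix H
  assume "H \<in> (\<Union>i\<in>I. orbit V (G i))"
  then obtain i where "i \<in> I" "loc_equiv V (G i) H"
    by (auto simp: orbit_def)
  with assms(1) show "H \<in> {H. qasst_equiv V G\<^sub>0 H}"
    using is_graph_if_qasst_equiv qasst_equiv_if_loc_equiv qasst_equiv_trans by blast
qed

lemma card_UN_orbit:
  assumes "finite V" and "finite I" and "\<forall>i\<in>I. is_graph V (G i)"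
    and "\<forall>i\<in>I. \<forall>j\<in>I. i \<noteq> j \<longrightarrow> \<not> loc_equiv V (G i) (G j)"
  shows "card (\<Union>i\<in>I. orbit V (G i)) = (\<Sum>i\<in>I. card (orbit V (G i)))"
proof (rule card_UN_disjoint)
  show "\<forall>i\<in>I. finite (orbit V (G i))"
    using assms(1,3) finite_orbit by blast
  show "\<forall>i\<in>I. \<forall>j\<in>I. i \<noteq> j \<longrightarrow> orbit V (G i) \<inter> orbit V (G j) = {}"
    using assms(3,4) orbits_disjoint by blast
qed (fact assms(2))

theorem corollary3:
  fixes V :: "'a set" and k :: nat and G :: "nat \<Rightarrow> ('a \<times> 'a) set"
  assumes "finite V"
    and "k \<ge> 1"
    and "\<forall>i\<in>{1..k}. is_graph V (G i)"
    and "\<forall>i\<in>{1..k}. \<forall>j\<in>{1..k}. i \<noteq> j \<longrightarrow> qasst_equiv V (G i) (G j)"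
    and "\<forall>i\<in>{1..k}. \<forall>j\<in>{1..k}. i \<noteq> j \<longrightarrow> \<not> loc_equiv V (G i) (G j)"
    and "\<forall>H. qasst_equiv V (G 1) H \<longrightarrow> (\<exists>i\<in>{1..k}. loc_equiv V H (G i))"
  shows "(\<Sum>i=1..k. card (orbit V (G i))) = Phi V (G 1)"
proof -
  have "qasst_equiv V (G 1) (G i)" if "i \<in> {1..k}" for i
    using assms(2-4) that qasst_equiv_refl[of V "G 1"] by (cases "i = 1") auto
  with assms(6) have "{H. qasst_equiv V (G 1) H} = (\<Union>i\<in>{1..k}. orbit V (G i))"
    by (intro qasst_class_eq_UN_orbit) auto
  moreover have "card (\<Union>i\<in>{1..k}. orbit V (G i)) = (\<Sum>i=1..k. card (orbit V (G i)))"
    using assms(1,3,5) by (intro card_UN_orbit) auto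
  ultimately show ?thesis
    by (simp add: Phi_def)
qed

end
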